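(* Let $(X,A)$ be an affinity space, let $\tau_A$ be the topology induced by $A$, and for $\lambda>0$ let $\tau_\lambda$ be the topology induced by the thresholded affinity $A^\lambda$. Let $\kappa(\lambda)$ be the number (cardinality) of connected components of $(X,\tau_\lambda)$ and $\kappa_A$ the number of connected components of $(X,\tau_A)$. Then: (a) if $0<\lambda_1<\lambda_2$, then $\tau_{\lambda_1}\subseteq\tau_{\lambda_2}\subseteq\tau_A$; (b) $\lambda\mapsto\kappa(\lambda)$ is nondecreasing on $(0,\infty)$ and $\kappa(\lambda)\le\kappa_A$ for every $\lambda>0$; (c) if $X$ is finite, then there exists $\Lambda>0$ such that for all $\lambda>\Lambda$ we have $\tau_\lambda=\tau_A$ and $\kappa(\lambda)=\kappa_A$.
   Context: An affinity on a set $X$ is a function $A:X\times X\to(0,+\infty]$ such that $A(x_1,x_2)=A(x_2,x_1)$ for all $x_1,x_2\in X$ and $A(x,x)=+\infty$ for all $x\in X$ (values $+\infty$ off the diagonal are allowed); $(X,A)$ is an affinity space. For $x\in X$, $\alpha>0$ let $E(x,\alpha)=\{y\in X:A(x,y)>\alpha\}$. The topology induced by $A$ is $\tau_A=\{U\subseteq X:\ \text{for every } x\in U \text{ there is } \alpha>0 \text{ with } E(x,\alpha)\subseteq U\}$. For $\lambda>0$ the thresholded affinity is $A^\lambda(x,y)=+\infty$ if $A(x,y)>\lambda$ and $A^\lambda(x,y)=A(x,y)$ if $A(x,y)\le\lambda$; it is again an affinity, and $\tau_\lambda$ denotes the topology induced by $A^\lambda$ in the same way. A subset $S$ of a topological space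 is connected if it cannot be covered by two disjoint open sets each meeting $S$; the connected component of $x$ is the union of all connected sets containing $x$. *)

theory Defs
  imports "HOL-Analysis.Analysis" "HOL-Library.Equipollence"
begin

definition affinity :: "'a set \<Rightarrow> ('a \<Rightarrow> 'a \<Rightarrow> ereal) \<Rightarrow> bool" where
  "affinity X A \<longleftrightarrow>
     (\<forall>x\<in>X. \<forall>y\<in>X. A x y > 0) \<and>
     (\<forall>x\<in>X. \<forall>y\<in>X. A x y = A y x) \<and>
     (\<forall>x\<in>X. A x x = \<infinity>)"

definition aff_ball :: "'a set \<Rightarrow> ('a \<Rightarrow> 'a \<Rightarrow> ereal) \<Rightarrow> 'a \<Rightarrow> real \<Rightarrow> 'a set" where
  "aff_ball X A x \<alpha> = {y \<in> X. A x y > ereal \<alpha>}"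

definition aff_topology :: "'a set \<Rightarrow> ('a \<Rightarrow> 'a \<Rightarrow> ereal) \<Rightarrow> 'a topology" where
  "aff_topology X A = topology (\<lambda>U. U \<subseteq> X \<and> (\<forall>x\<in>U. \<exists>\<alpha>>0. aff_ball X A x \<alpha> \<subseteq> U))"

definition thresh :: "('a \<Rightarrow> 'a \<Rightarrow> ereal) \<Rightarrow> real \<Rightarrow> 'a \<Rightarrow> 'a \<Rightarrow> ereal" where
  "thresh A t x y = (if A x y > ereal t then \<infinity> else A x y)"

end

theory Submission
  imports Defs
begin

text \<open>Thresholding only shrinks the family of balls around a point, since the ball of radius
  \<open>\<alpha>\<close> for \<open>A\<^sup>t\<close> is the ball of radius \<open>min \<alpha> t\<close> for \<open>A\<close>; so every threshold topology is coarser
  than the next one and than \<open>\<tau>\<^sub>A\<close>. A finer topology on the same space has at most as many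
  components, because each of its components is connected for the coarser topology and hence
  lies in a coarser component. On a finite carrier all finite values of \<open>A\<close> are bounded, and
  beyond that bound thresholding does not change \<open>A\<close> at all.\<close>

lemma istopology_aff:
  "istopology (\<lambda>U. U \<subseteq> X \<and> (\<forall>x\<in>U. \<exists>\<alpha>>0. aff_ball X A x \<alpha> \<subseteq> U))"
  unfolding istopology_def
proof (rule conjI; intro allI impI)
  fix S T
  assume S: "S \<subseteq> X \<and> (\<forall>x\<in>S. \<exists>\<alpha>>0. aff_ball X A x \<alpha> \<subseteq> S)"
    and T: "T \<subseteq> X \<and> (\<forall>x\<in>T. \<exists>\<alpha>>0. aff_ball X A x \<alpha> \<subseteq> T)"
  have "\<exists>\<gamma>>0. aff_ball X A x \<gamma> \<subseteq> S \<inter> T" if "x \<in> S \<inter> T" for x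
  proof -
    obtain \<alpha> \<beta> where "\<alpha> > 0" "aff_ball X A x \<alpha> \<subseteq> S" "\<beta> > 0" "aff_ball X A x \<beta> \<subseteq> T"
      using S T \<open>x \<in> S \<inter> T\<close> by blast
    then show ?thesis
      by (intro exI[of _ "max \<alpha> \<beta>"]) (auto simp: aff_ball_def)
  qed
  with S show "S \<inter> T \<subseteq> X \<and> (\<forall>x\<in>S \<inter> T. \<exists>\<gamma>>0. aff_ball X A x \<gamma> \<subseteq> S \<inter> T)"
    by blast
next
  fix K
  assume "\<forall>S\<in>K. S \<subseteq> X \<and> (\<forall>x\<in>S. \<exists>\<alpha>>0. aff_ball X A x \<alpha> \<subseteq> S)"
  then show "\<Union>K \<subseteq> X \<and> (\<forall>x\<in>\<Union>K. \<exists>\<alpha>>0. aff_ball X A x \<alpha> \<subseteq> \<Union>K)"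
    by (meson Union_least Union_upper UnionE order_trans)
qed

lemma openin_aff_topology:
  "openin (aff_topology X A) U \<longleftrightarrow> U \<subseteq> X \<and> (\<forall>x\<in>U. \<exists>\<alpha>>0. aff_ball X A x \<alpha> \<subseteq> U)"
  unfolding aff_topology_def topology_inverse'[OF istopology_aff] ..

lemma topspace_aff_topology: "topspace (aff_topology X A) = X"
proof -
  have "openin (aff_topology X A) X"
    unfolding openin_aff_topology aff_ball_def by (auto intro: exI[of _ 1])
  then show ?thesis
    by (metis openin_aff_topology openin_subset openin_topspace subset_antisym)
qed

lemma aff_topology_cong:
  assumes "\<And>x y. x \<in> X \<Longrightarrow> y \<in> X \<Longrightarrow> B x y = A x y"
  shows "aff_topology X B = aff_topology X A"
proof -
  have "aff_ball X B x \<alpha> = aff_ball X A x \<alpha>" if "x \<in> X" for x \<alpha>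
    using assms that by (auto simp: aff_ball_def)
  then show ?thesis
    by (simp add: topology_eq openin_aff_topology) blast
qed

lemma openin_aff_topology_coarser:
  assumes "\<And>x \<alpha>. x \<in> X \<Longrightarrow> \<alpha> > 0 \<Longrightarrow> \<exists>\<beta>>0. aff_ball X B x \<beta> \<subseteq> aff_ball X A x \<alpha>"
    and "openin (aff_topology X A) U"
  shows "openin (aff_topology X B) U"
  using assms unfolding openin_aff_topology by (meson order_trans subsetD)

lemma aff_ball_thresh: "aff_ball X (thresh A t) x \<alpha> = aff_ball X A x (min \<alpha> t)"
proof -
  have "(if z > ereal t then \<infinity> else z) > ereal \<alpha> \<longleftrightarrow> z > ereal (min \<alpha> t)" for z
    by (cases z) (auto simp: min_def)
  then show ?thesis
    unfolding aff_ball_def thresh_def by presburger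
qed

lemma openin_thresh_mono:
  assumes "0 < l1" "l1 \<le> l2" "openin (aff_topology X (thresh A l1)) U"
  shows "openin (aff_topology X (thresh A l2)) U"
proof (rule openin_aff_topology_coarser[OF _ assms(3)])
  fix x and \<alpha> :: real
  assume "\<alpha> > 0"
  then show "\<exists>\<beta>>0. aff_ball X (thresh A l2) x \<beta> \<subseteq> aff_ball X (thresh A l1) x \<alpha>"
    using assms(1,2) by (intro exI[of _ "min \<alpha> l1"]) (simp add: aff_ball_thresh min.absorb1)
qed

lemma openin_thresh_imp_openin:
  assumes "0 < l" "openin (aff_topology X (thresh A l)) U"
  shows "openin (aff_topology X A) U"
proof (rule openin_aff_topology_coarser[OF _ assms(2)])
  fix x and \<alpha> :: real
  assume "\<alpha> > 0"
  then show "\<exists>\<beta>>0. aff_ball X A x \<beta> \<subseteq> aff_ball X (thresh A l) x \<alpha>"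
    using assms(1) by (intro exI[of _ "min \<alpha> l"]) (simp add: aff_ball_thresh)
qed

lemma eventually_thresh_eq:
  assumes "finite X"
  shows "\<forall>\<^sub>F l in at_top. \<forall>x\<in>X. \<forall>y\<in>X. thresh A l x y = A x y"
proof -
  have "\<forall>\<^sub>F l in at_top. thresh A l x y = A x y" for x y
  proof (cases "A x y")
    case (real r)
    show ?thesis
      using eventually_ge_at_top[of r] by (rule eventually_mono) (simp add: thresh_def real)
  qed (simp_all add: thresh_def)
  then show ?thesis
    using assms by (simp add: eventually_ball_finite)
qed

lemma connected_components_of_lepoll_coarser:
  assumes "topspace T1 = topspace T2" and "\<And>U. openin T1 U \<Longrightarrow> openin T2 U"
  shows "connected_components_of T1 \<lesssim> connected_components_of T2"
proof -
  have "{x \<in> topspace T2. id x \<in> U} = U" if "openin T1 U" for U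
    using openin_subset[OF that] assms(1) by auto
  then have id: "continuous_map T2 T1 id"
    using assms by (simp add: continuous_map_def)
  have coarser: "connected_component_of T1 x = connected_component_of T1 y"
    if "connected_component_of T2 x y" for x y
  proof -
    have "connected_component_of T1 x y"
      using that connectedin_continuous_map_image[OF id]
      unfolding connected_component_of_def by fastforce
    then show ?thesis
      by (simp add: connected_component_of_equiv)
  qed
  have "connected_component_of_set T1 ` connected_component_of_set T2 x
          = {connected_component_of_set T1 x}"
    if "x \<in> topspace T2" for x
    using that coarser by (force simp: connected_component_of_refl)
  then have "connected_components_of T1
      = (\<lambda>D. \<Union> (connected_component_of_set T1 ` D)) ` connected_components_of T2"
    using assms(1) by (auto simp: connected_components_of_def image_image)
  then show ?thesis
    by (metis image_lepoll)
qed

theorem mainTheorem5: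
  fixes X :: "'a set" and A :: "'a \<Rightarrow> 'a \<Rightarrow> ereal"
  assumes "affinity X A"
  shows
    "(\<forall>l1 l2. 0 < l1 \<and> l1 < l2 \<longrightarrow>
        (\<forall>U. openin (aff_topology X (thresh A l1)) U \<longrightarrow> openin (aff_topology X (thresh A l2)) U) \<and>
        (\<forall>U. openin (aff_topology X (thresh A l2)) U \<longrightarrow> openin (aff_topology X A) U))
   \<and> (\<forall>l1 l2. 0 < l1 \<and> l1 \<le> l2 \<longrightarrow>
        connected_components_of (aff_topology X (thresh A l1))
          \<lesssim> connected_components_of (aff_topology X (thresh A l2)))
   \<and> (\<forall>l>0. connected_components_of (aff_topology X (thresh A l))
          \<lesssim> connected_components_of (aff_topology X A))
   \<and> (finite X \<longrightarrow>
        (\<exists>L>0. \<forall>l>L. aff_topology X (thresh A l) = aff_topology X A \<and>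
           connected_components_of (aff_topology X (thresh A l))
             \<approx> connected_components_of (aff_topology X A)))"
proof (intro conjI allI impI)
  fix l1 l2 :: real and U
  assume "0 < l1 \<and> l1 < l2"
  then show "openin (aff_topology X (thresh A l2)) U"
    if "openin (aff_topology X (thresh A l1)) U"
    using that by (simp add: openin_thresh_mono[of l1 l2])
  show "openin (aff_topology X A) U" if "openin (aff_topology X (thresh A l2)) U"
    using \<open>0 < l1 \<and> l1 < l2\<close> that by (meson openin_thresh_imp_openin less_trans)
next
  fix l1 l2 :: real
  assume "0 < l1 \<and> l1 \<le> l2"
  then show "connected_components_of (aff_topology X (thresh A l1))
      \<lesssim> connected_components_of (aff_topology X (thresh A l2))"
    by (intro connected_components_of_lepoll_coarser)
      (simp_all add: topspace_aff_topology openin_thresh_mono[of l1 l2])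
next
  fix l :: real
  assume "l > 0"
  then show "connected_components_of (aff_topology X (thresh A l))
      \<lesssim> connected_components_of (aff_topology X A)"
    by (intro connected_components_of_lepoll_coarser)
      (simp_all add: topspace_aff_topology openin_thresh_imp_openin[of l])
next
  assume "finite X"
  from eventually_thresh_eq[OF this, of A]
  obtain N where N: "\<forall>l\<ge>N. \<forall>x\<in>X. \<forall>y\<in>X. thresh A l x y = A x y"
    unfolding eventually_at_top_linorder by blast
  have "aff_topology X (thresh A l) = aff_topology X A" if "l > max N 1" for l
    using that N by (intro aff_topology_cong) auto
  then show "\<exists>L>0. \<forall>l>L. aff_topology X (thresh A l) = aff_topology X A \<and>
      connected_components_of (aff_topology X (thresh A l))
        \<approx> connected_components_of (aff_topology X A)"
    by (intro exI[of _ "max N 1"]) (simp add: eqpoll_refl)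
qed

end
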